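(* Let $S$ be a finite set of axis-parallel unit squares all containing the origin, with pairwise distinct $x$-coordinates of top-right corners (and pairwise distinct $y$-coordinates). Store $S$ in a leaf-oriented red-black tree $\mathcal{T}$ keyed by the $x$-coordinate $s_x$ of the top-right corner, and for each node $v$ let $s_{\max}(v)$ (resp. $s_{\min}(v)$) be the square $s\in S(v)$ maximizing (resp. minimizing) $s_y$. For $s\in S$ define $N_{NE}(s)$, $N_{SE}(s)$, $N_{SW}(s)$, $N_{NW}(s)$ as the sets of internal nodes $v$ with $s_{\max}(\mathit{right}(v))=s$, $s_{\min}(\mathit{right}(v))=s$, $s_{\min}(\mathit{left}(v))=s$, $s_{\max}(\mathit{left}(v))=s$, respectively, and $N(s)$ as the union of these four sets and the leaf storing $s$. Let $h(s)=\max_{v\in N(s)}\mathrm{height}(v)$. Set $\mathit{col}(s)=0$ if $h(s)=0$, and otherwise $\mathit{col}(s)=4h(s)+j$, where $j=0$ if $h(s)=\max_{v\in N_{NE}(s)}\mathrm{height}(v)$, else $j=1$ if $h(s)=\max_{v\in N_{SE}(s)}\mathrm{height}(v)$, else $j=2$ if $h(s)=\max_{v\in N_{SW}(s)}\mathrm{height}(v)$, and $j=3$ otherwise. Then this coloring is conflict-free with respect to points.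
   Context: A leaf-oriented red-black tree stores one key per leaf (here one square per leaf, ordered by $s_x$), and internal nodes store splitting values strictly between consecutive keys. For a node $v$: $\mathit{left}(v)$, $\mathit{right}(v)$ are its children, $S(v)$ is the set of squares in the leaves of its subtree, and $\mathrm{height}(v)$ is the height of its subtree (0 for a leaf); $s_y$ is the $y$-coordinate of the top-right corner of $s$. A coloring is conflict-free with respect to points if every point contained in at least one square lies in some square whose color is unique among the squares containing that point. A maximum over an empty set is taken as $-\infty$. *)

theory Defs
  imports Complex_Main
begin

text \<open>An axis-parallel unit square is represented by its top-right corner (s_x, s_y);
  it is the closed square [s_x - 1, s_x] x [s_y - 1, s_y].\<close>
type_synonym square = "real \<times> real"

definition sq :: "square \<Rightarrow> (real \<times> real) set" where
  "sq s = {p. fst s - 1 \<le> fst p \<and> fst p \<le> fst s \<and> snd s - 1 \<le> snd p \<and> snd p \<le> snd s}"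

datatype rbcolor = Red | Black

datatype 'a lrbt = Lf 'a | Nd rbcolor real "'a lrbt" "'a lrbt"

fun leaves :: "'a lrbt \<Rightarrow> 'a list" where
  "leaves (Lf a) = [a]"
| "leaves (Nd c k l r) = leaves l @ leaves r"

fun height :: "'a lrbt \<Rightarrow> nat" where
  "height (Lf a) = 0"
| "height (Nd c k l r) = Suc (max (height l) (height r))"

fun subtrees :: "'a lrbt \<Rightarrow> 'a lrbt set" where
  "subtrees (Lf a) = {Lf a}"
| "subtrees (Nd c k l r) = insert (Nd c k l r) (subtrees l \<union> subtrees r)"

fun is_internal :: "'a lrbt \<Rightarrow> bool" where
  "is_internal (Lf a) = False"
| "is_internal (Nd c k l r) = True"

fun left :: "'a lrbt \<Rightarrow> 'a lrbt" where
  "left (Nd c k l r) = l"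
| "left (Lf a) = Lf a"

fun right :: "'a lrbt \<Rightarrow> 'a lrbt" where
  "right (Nd c k l r) = r"
| "right (Lf a) = Lf a"

fun search_ok :: "square lrbt \<Rightarrow> bool" where
  "search_ok (Lf a) = True"
| "search_ok (Nd c k l r) =
     (search_ok l \<and> search_ok r \<and>
      (\<forall>s\<in>set (leaves l). fst s < k) \<and> (\<forall>s\<in>set (leaves r). k < fst s))"

fun color_of :: "'a lrbt \<Rightarrow> rbcolor" where
  "color_of (Lf a) = Black"
| "color_of (Nd c k l r) = c"

fun bheight :: "'a lrbt \<Rightarrow> nat" where
  "bheight (Lf a) = 1"
| "bheight (Nd c k l r) = (if c = Black then 1 else 0) + bheight l"

fun rb_inv :: "'a lrbt \<Rightarrow> bool" where
  "rb_inv (Lf a) = True"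
| "rb_inv (Nd c k l r) =
     (rb_inv l \<and> rb_inv r \<and> bheight l = bheight r \<and>
      (c = Red \<longrightarrow> color_of l = Black \<and> color_of r = Black))"

definition is_lrb_tree_of :: "square lrbt \<Rightarrow> square set \<Rightarrow> bool" where
  "is_lrb_tree_of T S \<longleftrightarrow> set (leaves T) = S \<and> distinct (leaves T) \<and>
     sorted_wrt (\<lambda>a b. fst a < fst b) (leaves T) \<and> search_ok T \<and>
     color_of T = Black \<and> rb_inv T"

definition smax :: "square lrbt \<Rightarrow> square" where
  "smax v = (THE s. s \<in> set (leaves v) \<and> (\<forall>t\<in>set (leaves v). snd t \<le> snd s))"

definition smin :: "square lrbt \<Rightarrow> square" where
  "smin v = (THE s. s \<in> set (leaves v) \<and> (\<forall>t\<in>set (leaves v). snd s \<le> snd t))"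

definition N_NE :: "square lrbt \<Rightarrow> square \<Rightarrow> square lrbt set" where
  "N_NE T s = {v \<in> subtrees T. is_internal v \<and> smax (right v) = s}"
definition N_SE :: "square lrbt \<Rightarrow> square \<Rightarrow> square lrbt set" where
  "N_SE T s = {v \<in> subtrees T. is_internal v \<and> smin (right v) = s}"
definition N_SW :: "square lrbt \<Rightarrow> square \<Rightarrow> square lrbt set" where
  "N_SW T s = {v \<in> subtrees T. is_internal v \<and> smin (left v) = s}"
definition N_NW :: "square lrbt \<Rightarrow> square \<Rightarrow> square lrbt set" where
  "N_NW T s = {v \<in> subtrees T. is_internal v \<and> smax (left v) = s}"

definition N_all :: "square lrbt \<Rightarrow> square \<Rightarrow> square lrbt set" where
  "N_all T s = N_NE T s \<union> N_SE T s \<union> N_SW T s \<union> N_NW T s \<union> {Lf s}"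

definition hN :: "square lrbt \<Rightarrow> square \<Rightarrow> nat" where
  "hN T s = Max (height ` N_all T s)"

text \<open>"h(s) = max over N_X(s)" is false when N_X(s) is empty (max = -infinity).\<close>
definition attains :: "square lrbt \<Rightarrow> square \<Rightarrow> square lrbt set \<Rightarrow> bool" where
  "attains T s A \<longleftrightarrow> A \<noteq> {} \<and> hN T s = Max (height ` A)"

definition col :: "square lrbt \<Rightarrow> square \<Rightarrow> nat" where
  "col T s = (if hN T s = 0 then 0
     else 4 * hN T s +
       (if attains T s (N_NE T s) then 0
        else if attains T s (N_SE T s) then 1
        else if attains T s (N_SW T s) then 2 else 3))"

definition conflict_free :: "square set \<Rightarrow> (square \<Rightarrow> nat) \<Rightarrow> bool" where
  "conflict_free S c \<longleftrightarrow>
     (\<forall>p. (\<exists>s\<in>S. p \<in> sq s) \<longrightarrow>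
        (\<exists>s\<in>S. p \<in> sq s \<and> (\<forall>t\<in>S. t \<noteq> s \<and> p \<in> sq t \<longrightarrow> c t \<noteq> c s)))"

end

theory Submission
  imports Defs
begin

text \<open>
  Every square contains the origin, so all corners lie in the unit box. Fix a point p and let s
  maximise h over the squares containing p; suppose t \<noteq> s also contains p and has the same colour.
  Then h(s) = h(t) and both are witnessed, in the same direction, by two distinct nodes of equal
  height, hence by two subtrees whose squares are separated in x. Because all x-coordinates lie in
  [0, 1], one of these subtrees has every square covering p in x; its topmost or bottommost square
  (depending on the sign of p_y) then contains p, and the parent of that subtree shows that this
  square has a larger h than s, a contradiction.
\<close>

lemma leaves_neq_Nil: "leaves u \<noteq> []"
  by (induction u) auto

lemma finite_subtrees: "finite (subtrees T)"
  by (induction T) auto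

lemma self_in_subtrees: "T \<in> subtrees T"
  by (cases T) auto

lemma Lf_in_subtrees: "a \<in> set (leaves T) \<Longrightarrow> Lf a \<in> subtrees T"
  by (induction T) auto

lemma set_leaves_subtree: "u \<in> subtrees T \<Longrightarrow> set (leaves u) \<subseteq> set (leaves T)"
  by (induction T) auto

lemma height_subtree_le: "u \<in> subtrees T \<Longrightarrow> height u \<le> height T"
  by (induction T) (auto simp: le_SucI le_max_iff_disj)

lemma height_subtree_less: "u \<in> subtrees T \<Longrightarrow> u \<noteq> T \<Longrightarrow> height u < height T"
  by (cases T) (auto simp: less_Suc_eq_le le_max_iff_disj height_subtree_le)

lemma height_child_less: "is_internal w \<Longrightarrow> left w = u \<or> right w = u \<Longrightarrow> height u < height w"
  by (cases w) auto

lemma subtree_has_parent: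
  "u \<in> subtrees T \<Longrightarrow> u \<noteq> T \<Longrightarrow> \<exists>w\<in>subtrees T. is_internal w \<and> (left w = u \<or> right w = u)"
proof (induction T)
  case (Nd c k l r)
  then show ?case
    by (cases "u = l \<or> u = r") (auto simp: self_in_subtrees intro: bexI[of _ "Nd c k l r"])
qed simp

lemma subtrees_same_height_separated:
  assumes "search_ok T" "u1 \<in> subtrees T" "u2 \<in> subtrees T" "u1 \<noteq> u2" "height u1 = height u2"
  shows "(\<forall>a\<in>set (leaves u1). \<forall>b\<in>set (leaves u2). fst a < fst b) \<or>
    (\<forall>a\<in>set (leaves u2). \<forall>b\<in>set (leaves u1). fst a < fst b)"
  using assms
proof (induction T)
  case (Nd c k l r)
  have "u1 \<noteq> Nd c k l r" "u2 \<noteq> Nd c k l r"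
    using Nd.prems height_subtree_less by (metis less_not_refl)+
  then have "u1 \<in> subtrees l \<union> subtrees r" "u2 \<in> subtrees l \<union> subtrees r"
    using Nd.prems by auto
  moreover have sep: "\<forall>a\<in>set (leaves l). \<forall>b\<in>set (leaves r). fst a < fst b"
    using Nd.prems(1) by fastforce
  ultimately consider "u1 \<in> subtrees l" "u2 \<in> subtrees l" | "u1 \<in> subtrees r" "u2 \<in> subtrees r"
    | "u1 \<in> subtrees l" "u2 \<in> subtrees r" | "u1 \<in> subtrees r" "u2 \<in> subtrees l"
    by blast
  then show ?case
  proof cases
    case 3
    then show ?thesis
      using sep set_leaves_subtree[OF 3(1)] set_leaves_subtree[OF 3(2)] by blast
  next
    case 4
    then show ?thesis
      using sep set_leaves_subtree[OF 4(1)] set_leaves_subtree[OF 4(2)] by blast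
  qed (use Nd in auto)
qed simp

lemma ex1_greatest_inj:
  fixes f :: "'a \<Rightarrow> 'b::linorder"
  assumes "finite A" "A \<noteq> {}" "inj_on f A"
  shows "\<exists>!x. x \<in> A \<and> (\<forall>y\<in>A. f y \<le> f x)"
proof -
  have "Max (f ` A) \<in> f ` A"
    using assms(1,2) by (intro Max_in) auto
  then obtain x where "x \<in> A" "f x = Max (f ` A)"
    by auto
  then have "x \<in> A \<and> (\<forall>y\<in>A. f y \<le> f x)"
    using assms(1) by auto
  then show ?thesis
    using assms(3) by (metis inj_onD order_antisym)
qed

lemma ex1_least_inj:
  fixes f :: "'a \<Rightarrow> 'b::linordered_ab_group_add"
  assumes "finite A" "A \<noteq> {}" "inj_on f A"
  shows "\<exists>!x. x \<in> A \<and> (\<forall>y\<in>A. f x \<le> f y)"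
  using ex1_greatest_inj[of A "\<lambda>x. - f x"] assms by (simp add: inj_on_def)

lemma smax_greatest:
  assumes "inj_on snd (set (leaves u))"
  shows "smax u \<in> set (leaves u) \<and> (\<forall>t\<in>set (leaves u). snd t \<le> snd (smax u))"
  unfolding smax_def
  by (rule theI' [OF ex1_greatest_inj]) (use assms leaves_neq_Nil in auto)

lemma smin_least:
  assumes "inj_on snd (set (leaves u))"
  shows "smin u \<in> set (leaves u) \<and> (\<forall>t\<in>set (leaves u). snd (smin u) \<le> snd t)"
  unfolding smin_def
  by (rule theI' [OF ex1_least_inj]) (use assms leaves_neq_Nil in auto)

definition extreme_child :: "nat \<Rightarrow> square lrbt \<Rightarrow> square" where
  "extreme_child j v = (if j = 0 then smax (right v) else if j = 1 then smin (right v)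
     else if j = 2 then smin (left v) else smax (left v))"

definition N_quadrant :: "nat \<Rightarrow> square lrbt \<Rightarrow> square \<Rightarrow> square lrbt set" where
  "N_quadrant j T s = {v \<in> subtrees T. is_internal v \<and> extreme_child j v = s}"

lemma N_quadrant_eqs:
  "N_quadrant 0 T s = N_NE T s" "N_quadrant 1 T s = N_SE T s"
  "N_quadrant 2 T s = N_SW T s" "N_quadrant 3 T s = N_NW T s"
  by (auto simp: N_quadrant_def extreme_child_def N_NE_def N_SE_def N_SW_def N_NW_def)

lemma N_all_eq: "N_all T s = insert (Lf s) (\<Union>j<4. N_quadrant j T s)"
  by (auto simp: N_all_def N_quadrant_eqs[symmetric] lessThan_Suc numeral_eq_Suc)

lemma finite_N_quadrant: "finite (N_quadrant j T s)"
  by (rule finite_subset[OF _ finite_subtrees]) (auto simp: N_quadrant_def)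

lemma finite_N_all: "finite (N_all T s)"
  unfolding N_all_eq using finite_N_quadrant by auto

lemma height_le_hN: "v \<in> N_all T s \<Longrightarrow> height v \<le> hN T s"
  unfolding hN_def using finite_N_all by auto

text \<open>The parent of a subtree u belongs to N(m) for both extreme squares m of u.\<close>
lemma height_less_hN_extreme:
  assumes "u \<in> subtrees T" "u \<noteq> T" "m = smax u \<or> m = smin u"
  shows "height u < hN T m"
proof -
  obtain w where w: "w \<in> subtrees T" "is_internal w" "left w = u \<or> right w = u"
    using subtree_has_parent[OF assms(1,2)] by blast
  then have "w \<in> N_all T m"
    using assms(3) unfolding N_all_def N_NE_def N_SE_def N_SW_def N_NW_def by auto
  then show ?thesis
    using height_le_hN height_child_less[OF w(2,3)] by (meson less_le_trans)
qed

lemma hN_pos: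
  assumes "a \<in> set (leaves T)" "is_internal T"
  shows "0 < hN T a"
proof -
  have "smax (Lf a) = a"
    using smax_greatest[of "Lf a"] by simp
  then show ?thesis
    using height_less_hN_extreme[of "Lf a" T a] Lf_in_subtrees[OF assms(1)] assms(2) by force
qed

definition col_index :: "square lrbt \<Rightarrow> square \<Rightarrow> nat" where
  "col_index T s = (if attains T s (N_quadrant 0 T s) then 0
     else if attains T s (N_quadrant 1 T s) then 1
     else if attains T s (N_quadrant 2 T s) then 2 else 3)"

lemma col_eq: "col T s = (if hN T s = 0 then 0 else 4 * hN T s + col_index T s)"
  unfolding col_def col_index_def N_quadrant_eqs by simp

lemma eq_col_imp_eq_hN:
  assumes "0 < hN T s" "0 < hN T t" "col T s = col T t"
  shows "hN T s = hN T t \<and> col_index T s = col_index T t"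
proof -
  have "col_index T s < 4" "col_index T t < 4"
    unfolding col_index_def by simp_all
  moreover have "4 * hN T s + col_index T s = 4 * hN T t + col_index T t"
    using assms unfolding col_eq by simp
  ultimately show ?thesis
    by presburger
qed

lemma attains_col_index:
  assumes "0 < hN T s"
  shows "attains T s (N_quadrant (col_index T s) T s)"
proof -
  have "hN T s \<in> height ` N_all T s"
    unfolding hN_def by (rule Max_in[OF finite_imageI[OF finite_N_all]]) (simp add: N_all_def)
  then obtain v where v: "v \<in> N_all T s" "height v = hN T s"
    by (metis imageE)
  moreover have "v \<noteq> Lf s"
    using v(2) assms by auto
  ultimately obtain j where j: "j < 4" "v \<in> N_quadrant j T s"
    unfolding N_all_eq by blast
  have "N_quadrant j T s \<subseteq> N_all T s"
    using j(1) unfolding N_all_eq by blast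
  then have "Max (height ` N_quadrant j T s) \<le> hN T s"
    using j(2) by (subst Max_le_iff[OF finite_imageI[OF finite_N_quadrant]]) (blast intro: height_le_hN)+
  moreover have "hN T s \<le> Max (height ` N_quadrant j T s)"
    using j(2) v(2) finite_N_quadrant by (metis Max_ge finite_imageI imageI)
  ultimately have "Max (height ` N_quadrant j T s) = hN T s"
    by simp
  then have "attains T s (N_quadrant j T s)"
    using j(2) unfolding attains_def by auto
  then show ?thesis
    using j(1) unfolding col_index_def by (auto simp: less_Suc_eq numeral_eq_Suc)
qed

lemma col_index_witness:
  assumes "0 < hN T s"
  obtains u where "u \<in> subtrees T" "is_internal u" "height u = hN T s"
    "extreme_child (col_index T s) u = s"
proof -
  let ?A = "N_quadrant (col_index T s) T s"
  have "?A \<noteq> {}" "hN T s = Max (height ` ?A)"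
    using attains_col_index[OF assms] unfolding attains_def by blast+
  moreover have "finite ?A"
    by (rule finite_N_quadrant)
  ultimately have "hN T s \<in> height ` ?A"
    by (metis Max_in finite_imageI image_is_empty)
  then obtain u where "u \<in> ?A" "height u = hN T s"
    by (metis imageE)
  then show ?thesis
    using that unfolding N_quadrant_def by blast
qed

lemma extreme_child_mem:
  assumes "inj_on snd (set (leaves u))" "is_internal u"
  shows "extreme_child j u \<in> set (leaves u)"
proof -
  obtain c k l r where u: "u = Nd c k l r"
    using assms(2) by (cases u) auto
  then have "inj_on snd (set (leaves l))" "inj_on snd (set (leaves r))"
    using assms(1) by (auto intro: inj_on_subset)
  then show ?thesis
    using u smax_greatest smin_least unfolding extreme_child_def by auto
qed

lemma separated_squares_x_cover:
  assumes "\<forall>s\<in>A \<union> B. (0, 0) \<in> sq s" "\<forall>a\<in>A. \<forall>b\<in>B. fst a < fst b"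
    "s \<in> A" "t \<in> B" "p \<in> sq s" "p \<in> sq t"
  shows "(\<forall>b\<in>B. fst b - 1 \<le> fst p \<and> fst p \<le> fst b) \<or>
    (\<forall>a\<in>A. fst a - 1 \<le> fst p \<and> fst p \<le> fst a)"
proof (cases "0 \<le> fst p")
  case True
  have "fst b - 1 \<le> fst p \<and> fst p \<le> fst b" if "b \<in> B" for b
  proof -
    have "fst s < fst b" "fst p \<le> fst s" "fst b \<le> 1"
      using assms that by (auto simp: sq_def)
    then show ?thesis
      using True by linarith
  qed
  then show ?thesis
    by blast
next
  case False
  have "fst a - 1 \<le> fst p \<and> fst p \<le> fst a" if "a \<in> A" for a
  proof -
    have "fst a < fst t" "fst t - 1 \<le> fst p" "0 \<le> fst a"
      using assms that by (auto simp: sq_def)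
    then show ?thesis
      using False by linarith
  qed
  then show ?thesis
    by blast
qed

lemma mem_sq_extreme:
  assumes "p \<in> sq a" "(0, 0) \<in> sq m" "fst m - 1 \<le> fst p" "fst p \<le> fst m"
    "0 \<le> snd p \<and> snd a \<le> snd m \<or> snd p < 0 \<and> snd m \<le> snd a"
  shows "p \<in> sq m"
  using assms by (auto simp: sq_def)

lemma x_covering_subtree_gives_higher:
  assumes "\<forall>s\<in>S. (0, 0) \<in> sq s" "set (leaves T) = S" "inj_on snd S"
    "u \<in> subtrees T" "u \<noteq> T" "\<forall>b\<in>set (leaves u). fst b - 1 \<le> fst p \<and> fst p \<le> fst b"
    "a \<in> set (leaves u)" "p \<in> sq a"
  shows "\<exists>m\<in>S. p \<in> sq m \<and> height u < hN T m"
proof -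
  have lu: "set (leaves u) \<subseteq> S"
    using set_leaves_subtree[OF assms(4)] assms(2) by simp
  then have inj: "inj_on snd (set (leaves u))"
    using assms(3) inj_on_subset by blast
  obtain m where "m = smax u \<and> 0 \<le> snd p \<or> m = smin u \<and> snd p < 0"
    by (cases "0 \<le> snd p") auto
  then have "m = smax u \<or> m = smin u" "m \<in> set (leaves u)"
    "0 \<le> snd p \<and> snd a \<le> snd m \<or> snd p < 0 \<and> snd m \<le> snd a"
    using smax_greatest[OF inj] smin_least[OF inj] assms(7) by auto
  moreover from this have "p \<in> sq m"
    using mem_sq_extreme[OF assms(8)] assms(1,6) lu by blast
  ultimately show ?thesis
    using height_less_hN_extreme[OF assms(4,5)] lu by blast
qed

lemma same_col_gives_higher:
  assumes "\<forall>s\<in>S. (0, 0) \<in> sq s" "inj_on snd S" "is_lrb_tree_of T S"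
    "s \<in> S" "t \<in> S" "s \<noteq> t" "p \<in> sq s" "p \<in> sq t" "col T s = col T t"
  shows "\<exists>m\<in>S. p \<in> sq m \<and> hN T s < hN T m"
proof -
  have T: "set (leaves T) = S" "search_ok T"
    using assms(3) unfolding is_lrb_tree_of_def by auto
  then have "is_internal T"
    using assms(4-6) by (cases T) auto
  then have pos: "0 < hN T s" "0 < hN T t"
    using hN_pos T(1) assms(4,5) by auto
  then have eq: "hN T s = hN T t" "col_index T s = col_index T t"
    using eq_col_imp_eq_hN[OF pos assms(9)] by auto
  obtain us where us: "us \<in> subtrees T" "is_internal us" "height us = hN T s"
    "extreme_child (col_index T s) us = s"
    using col_index_witness[OF pos(1)] by blast
  obtain ut where ut: "ut \<in> subtrees T" "is_internal ut" "height ut = hN T s"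
    "extreme_child (col_index T s) ut = t"
    using col_index_witness[OF pos(2)] unfolding eq by blast
  have "us \<noteq> ut"
    using us(4) ut(4) assms(6) by auto
  then have "us \<noteq> T" "ut \<noteq> T"
    using height_subtree_less[OF us(1)] height_subtree_less[OF ut(1)] us(3) ut(3) by auto
  have sub: "set (leaves us) \<subseteq> S" "set (leaves ut) \<subseteq> S"
    using set_leaves_subtree us(1) ut(1) T(1) by blast+
  have mem: "s \<in> set (leaves us)" "t \<in> set (leaves ut)"
    using extreme_child_mem[OF inj_on_subset[OF assms(2) sub(1)] us(2), of "col_index T s"]
      extreme_child_mem[OF inj_on_subset[OF assms(2) sub(2)] ut(2), of "col_index T s"]
    unfolding us(4) ut(4) by blast+
  have origin: "\<forall>x\<in>set (leaves us) \<union> set (leaves ut). (0, 0) \<in> sq x"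
    "\<forall>x\<in>set (leaves ut) \<union> set (leaves us). (0, 0) \<in> sq x"
    using sub assms(1) by auto
  from subtrees_same_height_separated[OF T(2) us(1) ut(1) \<open>us \<noteq> ut\<close>]
  have "(\<forall>b\<in>set (leaves ut). fst b - 1 \<le> fst p \<and> fst p \<le> fst b) \<or>
      (\<forall>b\<in>set (leaves us). fst b - 1 \<le> fst p \<and> fst p \<le> fst b)"
    using us(3) ut(3) separated_squares_x_cover[OF origin(1) _ mem assms(7,8)]
      separated_squares_x_cover[OF origin(2) _ mem(2,1) assms(8,7)] by auto
  then show ?thesis
  proof
    assume "\<forall>b\<in>set (leaves ut). fst b - 1 \<le> fst p \<and> fst p \<le> fst b"
    from x_covering_subtree_gives_higher[OF assms(1) T(1) assms(2) ut(1) \<open>ut \<noteq> T\<close> this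
        mem(2) assms(8)]
    show ?thesis
      using ut(3) by simp
  next
    assume "\<forall>b\<in>set (leaves us). fst b - 1 \<le> fst p \<and> fst p \<le> fst b"
    from x_covering_subtree_gives_higher[OF assms(1) T(1) assms(2) us(1) \<open>us \<noteq> T\<close> this
        mem(1) assms(7)]
    show ?thesis
      using us(3) by simp
  qed
qed

theorem mainTheorem3:
  fixes S :: "square set" and T :: "square lrbt"
  assumes "finite S"
    and "\<forall>s\<in>S. (0, 0) \<in> sq s"
    and "inj_on fst S"
    and "inj_on snd S"
    and "is_lrb_tree_of T S"
  shows "conflict_free S (col T)"
  unfolding conflict_free_def
proof (intro allI impI)
  fix p
  assume "\<exists>s\<in>S. p \<in> sq s"
  define P where "P = {s \<in> S. p \<in> sq s}"
  have "finite P" "P \<noteq> {}"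
    using assms(1) \<open>\<exists>s\<in>S. p \<in> sq s\<close> unfolding P_def by auto
  then have "Max (hN T ` P) \<in> hN T ` P"
    by (intro Max_in) auto
  then obtain s where s: "s \<in> P" "hN T s = Max (hN T ` P)"
    by auto
  have "\<not> hN T s < hN T m" if "m \<in> P" for m
    using s that \<open>finite P\<close> by (simp add: not_less)
  then have "\<forall>t\<in>S. t \<noteq> s \<and> p \<in> sq t \<longrightarrow> col T t \<noteq> col T s"
    using same_col_gives_higher[OF assms(2,4,5)] s(1) unfolding P_def by fastforce
  then show "\<exists>s\<in>S. p \<in> sq s \<and> (\<forall>t\<in>S. t \<noteq> s \<and> p \<in> sq t \<longrightarrow> col T t \<noteq> col T s)"
    using s(1) unfolding P_def by blast
qed

end
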